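(* Let $0<a\le 1$, $b=2-a$, $\tfrac12<c_1<1$, and let $(k_a(t),k_b(t))$ be the Markov chain $K$ described in the context, started from any state with $k_a+k_b\ge 2c_1 n$. Let $\tau_a$ be the first time with $k_a=n$. Then there is a constant $C$ depending only on $a,c_1$ such that $$\mathbb{E}\,\tau_a\le \frac{n}{a(2c_1-1)}\log\big((2c_1-1)n\big)+Cn .$$
   Context: The chain $K$ (it records the numbers $k_a,k_b$ of marked $a$-cards and marked $b$-cards in the second marking phase of a biased transposition shuffle of $N=2n$ cards, $n$ of each type). Its states are pairs $(k_a,k_b)$ of integers with $0\le k_a,k_b\le n$ and $k_a+k_b\ge n$. From $(k_a,k_b)$ it moves to $(k_a,k_b+1)$ with probability $\frac{2ab(n-k_b)(k_a+k_b+1)}{(2n)^2}$; to $(k_a+1,k_b)$ with probability $\frac{2a^2(n-k_a)(k_a+k_b+1)}{(2n)^2}$; to $(k_a+1,k_b-1)$ with probability $\frac{2a(b-a)(n-k_a)k_b}{(2n)^2}$; and otherwise stays put. *)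

theory Defs
  imports "HOL-Analysis.Analysis"
begin

definition pK_up_b :: "real \<Rightarrow> nat \<Rightarrow> nat \<Rightarrow> nat \<Rightarrow> real" where
  "pK_up_b a n ka kb = 2 * a * (2 - a) * (real n - real kb) * (real ka + real kb + 1) / (2 * real n)^2"

definition pK_up_a :: "real \<Rightarrow> nat \<Rightarrow> nat \<Rightarrow> nat \<Rightarrow> real" where
  "pK_up_a a n ka kb = 2 * a^2 * (real n - real ka) * (real ka + real kb + 1) / (2 * real n)^2"

definition pK_swap :: "real \<Rightarrow> nat \<Rightarrow> nat \<Rightarrow> nat \<Rightarrow> real" where
  "pK_swap a n ka kb = 2 * a * ((2 - a) - a) * (real n - real ka) * real kb / (2 * real n)^2"

text \<open>K_surv a n t (ka,kb) = probability, for the chain started at (ka,kb),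
  that k_a \<noteq> n at all times 0,...,t, i.e. P(tau_a > t).\<close>

fun K_surv :: "real \<Rightarrow> nat \<Rightarrow> nat \<Rightarrow> nat \<times> nat \<Rightarrow> real" where
  "K_surv a n 0 (ka, kb) = (if ka = n then 0 else 1)"
| "K_surv a n (Suc t) (ka, kb) =
     (if ka = n then 0 else
        pK_up_b a n ka kb * K_surv a n t (ka, kb + 1)
      + pK_up_a a n ka kb * K_surv a n t (ka + 1, kb)
      + pK_swap a n ka kb * K_surv a n t (ka + 1, kb - 1)
      + (1 - pK_up_b a n ka kb - pK_up_a a n ka kb - pK_swap a n ka kb) * K_surv a n t (ka, kb))"

text \<open>Expected hitting time E tau_a = sum over t of P(tau_a > t) (possibly infinite).\<close>

definition K_expected_tau_a :: "real \<Rightarrow> nat \<Rightarrow> nat \<times> nat \<Rightarrow> ennreal" where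
  "K_expected_tau_a a n s = (\<Sum>t. ennreal (K_surv a n t s))"

end

theory Submission
  imports Defs
begin

text \<open>
  Absorption depends only on \<open>k_a\<close>, and neither \<open>k_a\<close> nor \<open>k_a + k_b\<close> ever decreases,
  so the chain stays in the region \<open>k_a + k_b \<ge> 2 c_1 n\<close>. There \<open>k_a\<close> increases with
  probability at least \<open>\<rho> (n - k_a) / (2n)\<close>, where \<open>\<rho> = a (a + b (2 c_1 - 1))\<close>.
  Hence \<open>V(k_a) = (2n/\<rho>) H(n - k_a)\<close>, with \<open>H\<close> the harmonic numbers, satisfies the
  drift inequality \<open>1 + E V(X_1) \<le> V(X_0)\<close> off the absorbing line, which bounds every
  partial sum of \<open>P(\<tau>_a > t)\<close> by \<open>V(k_a)\<close>. Finally \<open>2/\<rho> \<le> 1/(a (2 c_1 - 1))\<close> and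
  \<open>H(n) \<le> 1 + ln n\<close>.
\<close>

definition K_region :: "real \<Rightarrow> nat \<Rightarrow> (nat \<times> nat) set" where
  "K_region c1 n = {(ka, kb). ka \<le> n \<and> kb \<le> n \<and> 2 * c1 * real n \<le> real ka + real kb}"

definition K_rate :: "real \<Rightarrow> real \<Rightarrow> real" where
  "K_rate a c1 = a * (a + (2 - a) * (2 * c1 - 1))"

definition K_lyapunov :: "real \<Rightarrow> real \<Rightarrow> nat \<Rightarrow> nat \<Rightarrow> real" where
  "K_lyapunov a c1 n ka = 2 * real n / K_rate a c1 * harm (n - ka)"

lemma harm_le_one_plus_ln: "n > 0 \<Longrightarrow> harm n \<le> 1 + ln (real n)"
  using euler_mascheroni_sequence_decreasing[of 1 n] by (simp add: harm_def)

lemma K_rate_pos: "0 < a \<Longrightarrow> a \<le> 1 \<Longrightarrow> 1/2 \<le> c1 \<Longrightarrow> 0 < K_rate a c1"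
  unfolding K_rate_def by (intro mult_pos_pos add_pos_nonneg mult_nonneg_nonneg) auto

lemma K_region_total_ge:
  assumes "1/2 \<le> c1" "(ka, kb) \<in> K_region c1 n"
  shows "n \<le> ka + kb"
proof -
  have "real n \<le> 2 * c1 * real n"
    using assms(1) mult_right_mono[of 1 "2 * c1" "real n"] by simp
  also have "\<dots> \<le> real ka + real kb"
    using assms(2) unfolding K_region_def by simp
  finally show ?thesis
    by linarith
qed

lemma K_region_steps:
  assumes "1/2 \<le> c1" "(ka, kb) \<in> K_region c1 n" "ka < n"
  shows "kb < n \<Longrightarrow> (ka, kb + 1) \<in> K_region c1 n"
    and "(ka + 1, kb) \<in> K_region c1 n"
    and "(ka + 1, kb - 1) \<in> K_region c1 n"
  using assms K_region_total_ge[OF assms(1,2)] unfolding K_region_def by auto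

lemma pK_nonneg:
  assumes "0 \<le> a" "a \<le> 1" "ka \<le> n" "kb \<le> n"
  shows "0 \<le> pK_up_b a n ka kb" "0 \<le> pK_up_a a n ka kb" "0 \<le> pK_swap a n ka kb"
  using assms unfolding pK_up_b_def pK_up_a_def pK_swap_def
  by (auto intro!: divide_nonneg_nonneg mult_nonneg_nonneg)

lemma pK_total_le_one:
  assumes a: "0 \<le> a" "a \<le> 1" and S: "ka \<le> n" "kb \<le> n" "n \<le> ka + kb"
  shows "pK_up_b a n ka kb + pK_up_a a n ka kb + pK_swap a n ka kb \<le> 1"
proof -
  define X where "X = real n - real ka"
  define Y where "Y = real n - real kb"
  define K where "K = real ka + real kb"
  have X: "0 \<le> X" and Y: "0 \<le> Y" and K: "real n \<le> K"
    using S unfolding X_def Y_def K_def by auto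
  have sum_eq: "pK_up_b a n ka kb + pK_up_a a n ka kb + pK_swap a n ka kb
      = 2 * a * ((2 - a) * Y * (K + 1) + a * X * (K + 1) + (2 - 2 * a) * X * real kb)
        / (2 * real n)\<^sup>2"
    unfolding pK_up_b_def pK_up_a_def pK_swap_def X_def Y_def K_def
    by (simp add: add_divide_distrib[symmetric] algebra_simps power2_eq_square)
  have "(2 - 2 * a) * X * real kb \<le> (2 - 2 * a) * X * (K + 1)"
    using a X unfolding K_def by (intro mult_left_mono) auto
  then have "(2 - a) * Y * (K + 1) + a * X * (K + 1) + (2 - 2 * a) * X * real kb
      \<le> (2 - a) * ((X + Y) * (K + 1))"
    by (simp add: algebra_simps)
  then have "2 * a * ((2 - a) * Y * (K + 1) + a * X * (K + 1) + (2 - 2 * a) * X * real kb)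
      \<le> 2 * (a * (2 - a)) * ((X + Y) * (K + 1))"
    using a by (auto dest: mult_left_mono[of _ _ "2 * a"])
  also have "\<dots> \<le> 2 * ((X + Y) * (K + 1))"
  proof -
    have "a * (2 - a) \<le> 1"
      using zero_le_power2[of "a - 1"] by (simp add: power2_eq_square algebra_simps)
    moreover have "0 \<le> (X + Y) * (K + 1)"
      using X Y K by simp
    ultimately show ?thesis
      using mult_right_mono by fastforce
  qed
  also have "(X + Y) * (K + 1) = real n * (real n + 1) - (K - real n) * (K - real n + 1)"
    unfolding X_def Y_def K_def by (simp add: algebra_simps)
  also have "2 * (\<dots>) \<le> (2 * real n)\<^sup>2"
  proof -
    have "real n \<le> real n * real n"
      by (cases n) auto
    moreover have "0 \<le> (K - real n) * (K - real n + 1)"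
      using K by simp
    ultimately show ?thesis
      by (simp add: power2_eq_square algebra_simps)
  qed
  finally show ?thesis
    unfolding sum_eq by (cases "n = 0") (simp_all add: divide_le_eq)
qed

lemma pK_advance_ge:
  assumes a: "0 \<le> a" "a \<le> 1" and S: "(ka, kb) \<in> K_region c1 n"
  shows "K_rate a c1 * (real n - real ka) / (2 * real n)
      \<le> pK_up_a a n ka kb + pK_swap a n ka kb"
proof -
  have ka: "real ka \<le> real n" and kb: "2 * c1 * real n - real ka \<le> real kb"
    using S unfolding K_region_def by auto
  have "(a + (2 - a) * (2 * c1 - 1)) * real n
      = (2 - a) * (2 * c1 * real n - real ka) + a * real ka - (2 - 2 * a) * (real n - real ka)"
    by (simp add: algebra_simps)
  also have "\<dots> \<le> (2 - a) * real kb + a * real ka"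
  proof -
    have "(2 - a) * (2 * c1 * real n - real ka) \<le> (2 - a) * real kb"
      using a kb by (intro mult_left_mono) auto
    moreover have "0 \<le> (2 - 2 * a) * (real n - real ka)"
      using a ka by simp
    ultimately show ?thesis by linarith
  qed
  also have "\<dots> \<le> a * (real ka + real kb + 1) + (2 - 2 * a) * real kb"
    using a by (simp add: algebra_simps)
  finally have rate: "(a + (2 - a) * (2 * c1 - 1)) * real n
      \<le> a * (real ka + real kb + 1) + (2 - 2 * a) * real kb" .
  have "K_rate a c1 * (real n - real ka) / (2 * real n)
      = 2 * a * (real n - real ka) * ((a + (2 - a) * (2 * c1 - 1)) * real n) / (2 * real n)\<^sup>2"
    unfolding K_rate_def by (cases "n = 0") (simp_all add: power2_eq_square field_simps)
  also have "\<dots> \<le> 2 * a * (real n - real ka)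
      * (a * (real ka + real kb + 1) + (2 - 2 * a) * real kb) / (2 * real n)\<^sup>2"
    using a ka rate by (intro divide_right_mono mult_left_mono) auto
  also have "\<dots> = pK_up_a a n ka kb + pK_swap a n ka kb"
    unfolding pK_up_a_def pK_swap_def
    by (simp add: add_divide_distrib[symmetric] algebra_simps power2_eq_square)
  finally show ?thesis .
qed

fun K_step :: "real \<Rightarrow> nat \<Rightarrow> (nat \<times> nat \<Rightarrow> real) \<Rightarrow> nat \<times> nat \<Rightarrow> real" where
  "K_step a n f (ka, kb) =
       pK_up_b a n ka kb * f (ka, kb + 1)
     + pK_up_a a n ka kb * f (ka + 1, kb)
     + pK_swap a n ka kb * f (ka + 1, kb - 1)
     + (1 - pK_up_b a n ka kb - pK_up_a a n ka kb - pK_swap a n ka kb) * f (ka, kb)"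

lemma K_surv_Suc_eq:
  "K_surv a n (Suc t) (ka, kb) = (if ka = n then 0 else K_step a n (K_surv a n t) (ka, kb))"
  by simp

lemma K_surv_absorbed: "K_surv a n t (n, kb) = 0"
  by (cases t) simp_all

lemma K_step_sum: "K_step a n (\<lambda>s. \<Sum>u\<in>A. f u s) s = (\<Sum>u\<in>A. K_step a n (f u) s)"
  by (cases s) (simp add: sum_distrib_left sum.distrib)

lemma K_step_lyapunov:
  "K_step a n (\<lambda>s. V (fst s)) (ka, kb)
     = V ka - (pK_up_a a n ka kb + pK_swap a n ka kb) * (V ka - V (Suc ka))"
  by (simp add: algebra_simps)

lemma K_step_mono:
  assumes a: "0 \<le> a" "a \<le> 1" and c1: "1/2 \<le> c1"
    and S: "(ka, kb) \<in> K_region c1 n" "ka < n"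
    and le: "\<And>s. s \<in> K_region c1 n \<Longrightarrow> f s \<le> g s"
  shows "K_step a n f (ka, kb) \<le> K_step a n g (ka, kb)"
proof -
  have bounds: "ka \<le> n" "kb \<le> n" "n \<le> ka + kb"
    using S K_region_total_ge[OF c1 S(1)] unfolding K_region_def by auto
  note p = pK_nonneg[OF a bounds(1,2)]
  have "pK_up_b a n ka kb * f (ka, kb + 1) \<le> pK_up_b a n ka kb * g (ka, kb + 1)"
  proof (cases "kb < n")
    case True
    then show ?thesis
      using p(1) le[OF K_region_steps(1)[OF c1 S True]] by (simp add: mult_left_mono)
  next
    case False
    then show ?thesis
      using bounds by (simp add: pK_up_b_def)
  qed
  moreover have "pK_up_a a n ka kb * f (ka + 1, kb) \<le> pK_up_a a n ka kb * g (ka + 1, kb)"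
    using p(2) le[OF K_region_steps(2)[OF c1 S]] by (simp add: mult_left_mono)
  moreover have "pK_swap a n ka kb * f (ka + 1, kb - 1) \<le> pK_swap a n ka kb * g (ka + 1, kb - 1)"
    using p(3) le[OF K_region_steps(3)[OF c1 S]] by (simp add: mult_left_mono)
  moreover have "(1 - pK_up_b a n ka kb - pK_up_a a n ka kb - pK_swap a n ka kb) * f (ka, kb)
      \<le> (1 - pK_up_b a n ka kb - pK_up_a a n ka kb - pK_swap a n ka kb) * g (ka, kb)"
    using pK_total_le_one[OF a bounds] le[OF S(1)] by (intro mult_left_mono) auto
  ultimately show ?thesis
    by simp
qed

lemma K_surv_nonneg:
  assumes a: "0 \<le> a" "a \<le> 1" and c1: "1/2 \<le> c1"
  shows "s \<in> K_region c1 n \<Longrightarrow> 0 \<le> K_surv a n t s"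
proof (induction t arbitrary: s)
  case 0
  then show ?case
    by (cases s) simp
next
  case (Suc t)
  obtain ka kb where s: "s = (ka, kb)"
    by fastforce
  show ?case
  proof (cases "ka = n")
    case False
    then have "ka < n"
      using Suc.prems s unfolding K_region_def by auto
    then have "K_step a n (\<lambda>_. 0) (ka, kb) \<le> K_step a n (K_surv a n t) (ka, kb)"
      using Suc s by (intro K_step_mono[OF a c1]) auto
    then show ?thesis
      using False s by simp
  qed (simp add: s)
qed

lemma K_surv_sum_le_lyapunov:
  assumes a: "0 \<le> a" "a \<le> 1" and c1: "1/2 \<le> c1"
    and V_nonneg: "\<And>k. 0 \<le> V k"
    and drift: "\<And>ka kb. (ka, kb) \<in> K_region c1 n \<Longrightarrow> ka < n \<Longrightarrow>
      1 \<le> (pK_up_a a n ka kb + pK_swap a n ka kb) * (V ka - V (Suc ka))"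
  shows "s \<in> K_region c1 n \<Longrightarrow> (\<Sum>u<t. K_surv a n u s) \<le> V (fst s)"
proof (induction t arbitrary: s)
  case 0
  then show ?case
    using V_nonneg by simp
next
  case (Suc t)
  obtain ka kb where s: "s = (ka, kb)"
    by fastforce
  show ?case
  proof (cases "ka = n")
    case True
    then show ?thesis
      using V_nonneg by (simp add: s K_surv_absorbed)
  next
    case False
    then have lt: "ka < n"
      using Suc.prems s unfolding K_region_def by auto
    have "(\<Sum>u<Suc t. K_surv a n u s) = 1 + K_step a n (\<lambda>s'. \<Sum>u<t. K_surv a n u s') (ka, kb)"
      unfolding sum.lessThan_Suc_shift K_step_sum
      by (simp add: s False K_surv_Suc_eq del: K_surv.simps(2) K_step.simps)
    also have "\<dots> \<le> 1 + K_step a n (\<lambda>s'. V (fst s')) (ka, kb)"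
      using Suc.IH Suc.prems lt s by (simp add: K_step_mono[OF a c1] del: K_step.simps)
    also have "\<dots> \<le> V ka"
      using drift[of ka kb] Suc.prems lt s by (simp add: K_step_lyapunov del: K_step.simps)
    finally show ?thesis
      by (simp add: s)
  qed
qed

lemma K_lyapunov_nonneg:
  assumes "0 < a" "a \<le> 1" "1/2 \<le> c1"
  shows "0 \<le> K_lyapunov a c1 n k"
  unfolding K_lyapunov_def
  using K_rate_pos[OF assms] by (intro divide_nonneg_pos mult_nonneg_nonneg harm_nonneg) auto

lemma K_lyapunov_drift:
  assumes a: "0 < a" "a \<le> 1" and c1: "1/2 \<le> c1" and S: "(ka, kb) \<in> K_region c1 n" "ka < n"
  shows "1 \<le> (pK_up_a a n ka kb + pK_swap a n ka kb)
              * (K_lyapunov a c1 n ka - K_lyapunov a c1 n (Suc ka))"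
proof -
  have rho: "0 < K_rate a c1"
    using K_rate_pos[OF a c1] .
  have gap: "0 < real n - real ka"
    using S(2) by simp
  have "harm (n - ka) - harm (n - Suc ka) = 1 / (real n - real ka)"
    using S(2) harm_Suc[of "n - Suc ka"] by (simp add: Suc_diff_Suc field_simps)
  then have diff: "K_lyapunov a c1 n ka - K_lyapunov a c1 n (Suc ka)
      = 2 * real n / (K_rate a c1 * (real n - real ka))"
    unfolding K_lyapunov_def right_diff_distrib[symmetric] by simp
  have "1 = K_rate a c1 * (real n - real ka) / (2 * real n)
      * (2 * real n / (K_rate a c1 * (real n - real ka)))"
    using rho gap S(2) by (simp add: field_simps)
  also have "\<dots> \<le> (pK_up_a a n ka kb + pK_swap a n ka kb)
      * (2 * real n / (K_rate a c1 * (real n - real ka)))"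
    using pK_advance_ge[OF less_imp_le[OF a(1)] a(2) S(1)] rho gap by (intro mult_right_mono) auto
  finally show ?thesis
    unfolding diff .
qed

lemma K_expected_tau_a_le_lyapunov:
  assumes a: "0 < a" "a \<le> 1" and c1: "1/2 \<le> c1" and S: "(ka, kb) \<in> K_region c1 n"
  shows "K_expected_tau_a a n (ka, kb) \<le> ennreal (K_lyapunov a c1 n ka)"
proof -
  have "(\<Sum>u<t. ennreal (K_surv a n u (ka, kb))) \<le> ennreal (K_lyapunov a c1 n ka)" for t
  proof -
    have "(\<Sum>u<t. K_surv a n u (ka, kb)) \<le> K_lyapunov a c1 n ka"
      using K_surv_sum_le_lyapunov[OF less_imp_le[OF a(1)] a(2) c1 K_lyapunov_nonneg[OF a c1]
          K_lyapunov_drift[OF a c1] S]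
      by simp
    then show ?thesis
      using K_surv_nonneg[OF less_imp_le[OF a(1)] a(2) c1 S] by (simp add: ennreal_leI)
  qed
  then show ?thesis
    unfolding K_expected_tau_a_def by (intro suminf_le_const summableI)
qed

lemma K_lyapunov_le:
  assumes a: "0 < a" "a \<le> 1" and c1: "1/2 < c1" "c1 \<le> 1" and n: "0 < n"
  shows "K_lyapunov a c1 n ka \<le> real n / (a * (2 * c1 - 1)) * (1 + ln (real n))"
proof -
  have rate: "2 * (a * (2 * c1 - 1)) \<le> K_rate a c1"
    using a c1 mult_nonneg_nonneg[of a "2 - 2 * c1"] unfolding K_rate_def
    by (simp add: algebra_simps)
  have "2 / K_rate a c1 \<le> 2 / (2 * (a * (2 * c1 - 1)))"
    using rate a c1 by (intro frac_le) auto
  then have "2 / K_rate a c1 \<le> 1 / (a * (2 * c1 - 1))"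
    by simp
  moreover have "harm (n - ka) \<le> 1 + ln (real n)"
    by (rule order_trans[OF harm_mono harm_le_one_plus_ln[OF n]]) simp
  moreover have "0 \<le> 1 / (a * (2 * c1 - 1))"
    using a c1 by simp
  moreover have "0 \<le> (harm (n - ka) :: real)"
    by (rule harm_nonneg)
  ultimately have "2 / K_rate a c1 * harm (n - ka) \<le> 1 / (a * (2 * c1 - 1)) * (1 + ln (real n))"
    by (rule mult_mono)
  then have "real n * (2 / K_rate a c1 * harm (n - ka))
      \<le> real n * (1 / (a * (2 * c1 - 1)) * (1 + ln (real n)))"
    by (rule mult_left_mono) simp
  then show ?thesis
    unfolding K_lyapunov_def by (simp add: mult_ac)
qed

theorem mainTheorem4:
  fixes a c1 :: real
  assumes "0 < a" and "a \<le> 1" and "1/2 < c1" and "c1 < 1"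
  shows "\<exists>C::real. \<forall>n::nat. \<forall>ka kb::nat.
           n \<ge> 1 \<longrightarrow> ka \<le> n \<longrightarrow> kb \<le> n \<longrightarrow>
           real ka + real kb \<ge> 2 * c1 * real n \<longrightarrow>
           K_expected_tau_a a n (ka, kb)
             \<le> ennreal (real n / (a * (2 * c1 - 1)) * ln ((2 * c1 - 1) * real n) + C * real n)"
proof (intro exI allI impI)
  fix n ka kb :: nat
  assume n: "n \<ge> 1" and S: "ka \<le> n" "kb \<le> n" "real ka + real kb \<ge> 2 * c1 * real n"
  define e where "e = 2 * c1 - 1"
  have e: "0 < e"
    using assms unfolding e_def by simp
  have "K_expected_tau_a a n (ka, kb) \<le> ennreal (K_lyapunov a c1 n ka)"
    using S assms by (intro K_expected_tau_a_le_lyapunov) (auto simp: K_region_def)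
  also have "K_lyapunov a c1 n ka \<le> real n / (a * e) * (1 + ln (real n))"
    using K_lyapunov_le[of a c1 n ka] assms n unfolding e_def by simp
  also have "\<dots> = real n / (a * e) * ln (e * real n) + (1 - ln e) / (a * e) * real n"
    using e n assms(1) by (simp add: ln_mult field_simps)
  finally show "K_expected_tau_a a n (ka, kb)
      \<le> ennreal (real n / (a * (2 * c1 - 1)) * ln ((2 * c1 - 1) * real n)
                 + (1 - ln (2 * c1 - 1)) / (a * (2 * c1 - 1)) * real n)"
    unfolding e_def by (simp add: ennreal_leI)
qed

end
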